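(* Let $n\ge 3$, let $H$ be an exploding double chain and let $H_n=\{p_i,q_i : 1\le i\le n\}$ be its initial part. Let $G'$ be a graph on $n$ vertices, and let $G$ be a plane graph on the same vertex set which contains $G'$ as a spanning subgraph and which has a one-sided Hamiltonian cycle $(v_1,v_2,\ldots,v_n)$ with special edge $v_nv_1$. Then $G'$ has a crossing-free straight-line drawing with vertices on points of $H_n$ in which, for every $i\in\{1,\ldots,n\}$, the vertex $v_i$ is placed on $p_i$ or on $q_i$.
   Context: Exploding double chain: let $(y_i)_{i\ge1}$ be a sequence of reals with $y_1=y_2=0$ such that for every $n\ge 2$, $y_{n+1}>0$ and every line through two distinct points of $H_n=\{p_i,q_i: 1\le i\le n\}$, where $p_i=(i,y_i)$ and $q_i=(i,-y_i)$, meets the vertical line $x=n+1$ (if it meets it) in a point whose $y$-coordinate lies strictly between $-y_{n+1}$ and $y_{n+1}$. The set $H=\{p_i,q_i: i\ge 1\}$ is an exploding double chain. Since $p_1=q_1$ and $p_2=q_2$, $|H_n|=2n-2$. (For instance $y_1=y_2=0$, $y_i=3^{i-3}$ for $i\ge 3$ works.) One-sided Hamiltonian cycle: a plane graph $G$ on $n\ge 3$ vertices has a one-sided Hamiltonian cycle $(v_1,\ldots,v_n)$ with special edge $v_nv_1$ if $(v_1,\ldots,v_n)$ is a Hamiltonian cycle of $G$, the edge $v_nv_1$ is incident to the outer face, and, letting $D$ be the closed bounded region of the plane whose boundary is this cycle, for every $j\in\{2,\ldots,n\}$ the edges of $G$ not on the cycle that join $v_j$ to some $v_i$ with $i<j$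 are either all drawn in the interior of $D$ or all drawn in the exterior of $D$. *)

theory Defs
  imports "HOL-Analysis.Analysis"
begin

definition pt :: "(nat \<Rightarrow> real) \<Rightarrow> nat \<Rightarrow> complex" where
  "pt y i = Complex (real i) (y i)"

definition qt :: "(nat \<Rightarrow> real) \<Rightarrow> nat \<Rightarrow> complex" where
  "qt y i = Complex (real i) (- y i)"

definition Hset :: "(nat \<Rightarrow> real) \<Rightarrow> nat \<Rightarrow> complex set" where
  "Hset y n = pt y ` {1..n} \<union> qt y ` {1..n}"

text \<open>Every non-vertical line through two distinct points of H_n meets the vertical line
  x = n+1 at a point with y-coordinate strictly between -y(n+1) and y(n+1).
  (Vertical lines do not meet x = n+1.)\<close>
definition exploding_double_chain :: "(nat \<Rightarrow> real) \<Rightarrow> bool" where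
  "exploding_double_chain y \<longleftrightarrow>
     y 1 = 0 \<and> y 2 = 0 \<and>
     (\<forall>n\<ge>2. y (Suc n) > 0 \<and>
        (\<forall>a\<in>Hset y n. \<forall>b\<in>Hset y n. a \<noteq> b \<longrightarrow> Re a \<noteq> Re b \<longrightarrow>
           \<bar>Im a + (Im b - Im a) * (real (Suc n) - Re a) / (Re b - Re a)\<bar> < y (Suc n)))"

definition simple_graph :: "'v set \<Rightarrow> 'v set set \<Rightarrow> bool" where
  "simple_graph V E \<longleftrightarrow> finite V \<and> (\<forall>e\<in>E. \<exists>u w. u \<in> V \<and> w \<in> V \<and> u \<noteq> w \<and> e = {u, w})"

definition plane_drawing ::
  "'v set \<Rightarrow> 'v set set \<Rightarrow> ('v \<Rightarrow> complex) \<Rightarrow> ('v set \<Rightarrow> real \<Rightarrow> complex) \<Rightarrow> bool" where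
  "plane_drawing V E pos c \<longleftrightarrow>
     simple_graph V E \<and> inj_on pos V \<and>
     (\<forall>e\<in>E. arc (c e) \<and> {pathstart (c e), pathfinish (c e)} = pos ` e) \<and>
     (\<forall>e\<in>E. \<forall>x\<in>V. pos x \<in> path_image (c e) \<longrightarrow> x \<in> e) \<and>
     (\<forall>e\<in>E. \<forall>f\<in>E. e \<noteq> f \<longrightarrow> path_image (c e) \<inter> path_image (c f) \<subseteq> pos ` (e \<inter> f))"

definition drawing_set :: "'v set \<Rightarrow> 'v set set \<Rightarrow> ('v \<Rightarrow> complex) \<Rightarrow> ('v set \<Rightarrow> real \<Rightarrow> complex) \<Rightarrow> complex set" where
  "drawing_set V E pos c = pos ` V \<union> (\<Union>e\<in>E. path_image (c e))"

definition outer_face :: "'v set \<Rightarrow> 'v set set \<Rightarrow> ('v \<Rightarrow> complex) \<Rightarrow> ('v set \<Rightarrow> real \<Rightarrow> complex) \<Rightarrow> complex set" where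
  "outer_face V E pos c = outside (drawing_set V E pos c)"

definition open_arc :: "(real \<Rightarrow> complex) \<Rightarrow> complex set" where
  "open_arc g = path_image g - {pathstart g, pathfinish g}"

definition cycle_edges :: "(nat \<Rightarrow> 'v) \<Rightarrow> nat \<Rightarrow> 'v set set" where
  "cycle_edges v n = {{v i, v (Suc i)} | i. 1 \<le> i \<and> i < n} \<union> {{v n, v 1}}"

definition hamiltonian_cycle :: "'v set \<Rightarrow> 'v set set \<Rightarrow> nat \<Rightarrow> (nat \<Rightarrow> 'v) \<Rightarrow> bool" where
  "hamiltonian_cycle V E n v \<longleftrightarrow> n \<ge> 3 \<and> bij_betw v {1..n} V \<and> cycle_edges v n \<subseteq> E"

definition one_sided_ham_cycle ::
  "'v set \<Rightarrow> 'v set set \<Rightarrow> ('v \<Rightarrow> complex) \<Rightarrow> ('v set \<Rightarrow> real \<Rightarrow> complex) \<Rightarrow> nat \<Rightarrow> (nat \<Rightarrow> 'v) \<Rightarrow> bool" where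
  "one_sided_ham_cycle V E pos c n v \<longleftrightarrow>
     hamiltonian_cycle V E n v \<and>
     path_image (c {v n, v 1}) \<subseteq> closure (outer_face V E pos c) \<and>
     (let C = (\<Union>e\<in>cycle_edges v n. path_image (c e)) in
      \<forall>j\<in>{2..n}.
        (\<forall>i\<in>{1..<j}. {v i, v j} \<in> E - cycle_edges v n \<longrightarrow> open_arc (c {v i, v j}) \<subseteq> inside C) \<or>
        (\<forall>i\<in>{1..<j}. {v i, v j} \<in> E - cycle_edges v n \<longrightarrow> open_arc (c {v i, v j}) \<subseteq> outside C))"

definition straight_line_plane :: "'v set \<Rightarrow> 'v set set \<Rightarrow> ('v \<Rightarrow> complex) \<Rightarrow> bool" where
  "straight_line_plane V E pos \<longleftrightarrow>
     inj_on pos V \<and>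
     (\<forall>e\<in>E. \<forall>x\<in>V. pos x \<in> convex hull (pos ` e) \<longrightarrow> x \<in> e) \<and>
     (\<forall>e\<in>E. \<forall>f\<in>E. e \<noteq> f \<longrightarrow> convex hull (pos ` e) \<inter> convex hull (pos ` f) \<subseteq> pos ` (e \<inter> f))"

end

theory Submission
  imports Defs "HOL-Complex_Analysis.Complex_Analysis"
begin

text \<open>Place v_j on p_j if the chords from v_j to earlier vertices lie inside the Hamiltonian
  cycle and on q_j if they lie outside. Because the chain explodes, p_m lies above and q_m below
  every line through earlier points, so two segments p_i p_j and p_k p_l with j \<le> l can only
  cross if i < k < j < l and v_j, v_l were sent to the same side. The two chords v_i v_j and
  v_k v_l would then lie on the same side of the cycle with interleaving ends, which the Jordan
  curve theorem rules out: the first chord and the two cycle arcs between its ends form a theta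
  curve, and the second chord would join the interiors of both arcs without crossing the first.\<close>

section \<open>Arcs and Jordan curves\<close>

lemma open_arc_eq:
  assumes "arc g"
  shows "open_arc g = g ` {0<..<1}"
proof -
  have "g t \<noteq> g 0" "g t \<noteq> g 1" if "0 < t" "t < 1" for t
    using assms that unfolding arc_def inj_on_def by (metis atLeastAtMost_iff less_eq_real_def less_irrefl zero_le_one)+
  then show ?thesis
    unfolding open_arc_def path_image_def pathstart_def pathfinish_def
    by (fastforce simp: less_eq_real_def)
qed

lemma open_arc_subset_path_image: "open_arc g \<subseteq> path_image g"
  by (auto simp: open_arc_def)

lemma arc_midpoint_in_open_arc: "arc g \<Longrightarrow> g (1/2) \<in> open_arc g"
  by (simp add: open_arc_eq)

lemma path_image_eq_open_arc_Un: "path_image g = open_arc g \<union> {pathstart g, pathfinish g}"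
  by (auto simp: open_arc_def)

lemma connected_open_arc:
  assumes "arc g"
  shows "connected (open_arc g)"
proof -
  have "continuous_on {0<..<1} g"
    using arc_imp_path[OF assms] unfolding path_def by (rule continuous_on_subset) auto
  then show ?thesis
    unfolding open_arc_eq[OF assms] by (rule connected_continuous_image) simp
qed

lemma path_image_subset_closure_open_arc:
  assumes "arc g"
  shows "path_image g \<subseteq> closure (open_arc g)"
proof -
  have "continuous_on (closure {0<..<1}) g"
    using arc_imp_path[OF assms] by (simp add: path_def closure_greaterThanLessThan)
  then have "g ` closure {0<..<(1::real)} \<subseteq> closure (g ` {0<..<1})"
    by (rule image_closure_subset) (simp_all add: closure_subset)
  then show ?thesis
    using assms by (simp add: open_arc_eq path_image_def closure_greaterThanLessThan)
qed

lemma arc_with_ends: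
  assumes "arc g" "{pathstart g, pathfinish g} = {p, q}" "p \<noteq> q"
  obtains g' where "arc g'" "pathstart g' = p" "pathfinish g' = q"
    "path_image g' = path_image g" "open_arc g' = open_arc g"
proof (cases "pathstart g = p")
  case True
  then show ?thesis using assms that by (metis doubleton_eq_iff)
next
  case False
  then have "pathstart (reversepath g) = p" "pathfinish (reversepath g) = q"
    using assms(2) by (auto simp: doubleton_eq_iff)
  with assms(1) show ?thesis
    by (intro that[of "reversepath g"]) (auto simp: arc_reversepath open_arc_def)
qed

lemma closed_arc_images_Un:
  fixes p q :: "real \<Rightarrow> 'a::t2_space"
  shows "arc p \<Longrightarrow> arc q \<Longrightarrow> closed (path_image p \<union> path_image q)"
  by (meson closed_Un closed_path_image arc_imp_path)

lemma frontier_inside_arcs_subset: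
  fixes p q :: "real \<Rightarrow> 'a::{real_normed_vector,t2_space}"
  shows "arc p \<Longrightarrow> arc q \<Longrightarrow> frontier (inside (path_image p \<union> path_image q)) \<subseteq> path_image p \<union> path_image q"
  by (intro frontier_inside_subset closed_arc_images_Un)

lemma open_inside_arcs:
  fixes p q :: "real \<Rightarrow> 'a::real_normed_vector"
  shows "arc p \<Longrightarrow> arc q \<Longrightarrow> open (inside (path_image p \<union> path_image q))"
  by (intro open_inside closed_arc_images_Un)

lemma two_arcs_loop:
  assumes "arc p" "arc q" "pathstart p = a" "pathfinish p = b" "pathstart q = a" "pathfinish q = b"
    "path_image p \<inter> path_image q = {a,b}"
  shows "simple_path (p +++ reversepath q)"
    and "pathfinish (p +++ reversepath q) = pathstart (p +++ reversepath q)"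
    and "path_image (p +++ reversepath q) = path_image p \<union> path_image q"
  using assms by (auto simp: simple_path_join_loop_eq arc_reversepath path_image_join)

lemma two_arcs_Jordan:
  fixes p q :: "real \<Rightarrow> complex"
  assumes "arc p" "arc q" "pathstart p = a" "pathfinish p = b" "pathstart q = a" "pathfinish q = b"
    "path_image p \<inter> path_image q = {a,b}"
  shows "inside (path_image p \<union> path_image q) \<noteq> {}"
    and "connected (inside (path_image p \<union> path_image q))"
    and "frontier (inside (path_image p \<union> path_image q)) = path_image p \<union> path_image q"
  using Jordan_inside_outside[OF two_arcs_loop(1,2)[OF assms]] two_arcs_loop(3)[OF assms] by auto

lemma winding_number_two_arcs_loop:
  assumes "path p" "path q" "pathfinish p = pathfinish q" "z \<notin> path_image p" "z \<notin> path_image q"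
  shows "winding_number (p +++ reversepath q) z = winding_number p z - winding_number q z"
  using assms by (simp add: winding_number_join winding_number_reversepath)

section \<open>Theta curves\<close>

locale theta_curve =
  fixes c1 c2 g :: "real \<Rightarrow> complex" and a b :: complex
  assumes arcs: "arc c1" "arc c2" "arc g"
    and ends: "pathstart c1 = a" "pathfinish c1 = b" "pathstart c2 = a" "pathfinish c2 = b"
              "pathstart g = a" "pathfinish g = b"
    and distinct_ends: "a \<noteq> b"
    and c1_c2: "path_image c1 \<inter> path_image c2 = {a,b}"
    and c1_g: "path_image c1 \<inter> path_image g = {a,b}"
    and c2_g: "path_image c2 \<inter> path_image g = {a,b}"
begin

lemma swap: "theta_curve c2 c1 g a b"
  using arcs ends distinct_ends c1_c2 c1_g c2_g by unfold_locales auto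

text \<open>A chord g drawn inside the loop c1 \<union> c2 splits its inside into two regions, each bounded
  by g and one of c1, c2; a connected set avoiding g lies in one of them and so cannot approach
  interior points of both c1 and c2.\<close>

lemma inside_chord_separates:
  assumes g_in: "open_arc g \<subseteq> inside (path_image c1 \<union> path_image c2)"
    and T: "connected T" "T \<subseteq> inside (path_image c1 \<union> path_image c2)" "T \<inter> path_image g = {}"
    and p: "p \<in> closure T" "p \<in> path_image c1" "p \<notin> {a,b}"
    and q: "q \<in> closure T" "q \<in> path_image c2" "q \<notin> {a,b}"
  shows False
proof -
  let ?I1 = "inside (path_image c1 \<union> path_image g)"
  let ?I2 = "inside (path_image c2 \<union> path_image g)"
  let ?U = "inside (path_image c1 \<union> path_image c2)"
  have nested: "path_image g \<inter> ?U \<noteq> {}"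
    using g_in arc_midpoint_in_open_arc[OF arcs(3)] open_arc_subset_path_image by blast
  obtain disj: "?I1 \<inter> ?I2 = {}" and union: "?I1 \<union> ?I2 \<union> (path_image g - {a,b}) = ?U"
    by (rule split_inside_simple_closed_curve[of c1 a b c2 g])
       (use arcs ends distinct_ends c1_c2 c1_g c2_g nested in \<open>auto simp: arc_imp_simple_path\<close>)
  have "T \<subseteq> ?I1 \<union> ?I2" using T union by blast
  then have "T \<subseteq> ?I1 \<or> T \<subseteq> ?I2"
    using T(1) open_inside_arcs[OF arcs(1) arcs(3)] open_inside_arcs[OF arcs(2) arcs(3)] disj
    unfolding connected_def by blast
  then show False
  proof
    assume "T \<subseteq> ?I1"
    then have "q \<in> closure ?I1" using q closure_mono by blast
    then have "q \<in> ?I1 \<union> frontier ?I1" by (simp add: closure_Un_frontier)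
    moreover have "?I1 \<subseteq> ?U" using union by blast
    moreover have "q \<notin> ?U" using q inside_no_overlap by blast
    ultimately show False
      using frontier_inside_arcs_subset[OF arcs(1) arcs(3)] q c1_c2 c2_g by blast
  next
    assume "T \<subseteq> ?I2"
    then have "p \<in> closure ?I2" using p closure_mono by blast
    then have "p \<in> ?I2 \<union> frontier ?I2" by (simp add: closure_Un_frontier)
    moreover have "?I2 \<subseteq> ?U" using union by blast
    moreover have "p \<notin> ?U" using p inside_no_overlap by blast
    ultimately show False
      using frontier_inside_arcs_subset[OF arcs(2) arcs(3)] p c1_c2 c1_g by blast
  qed
qed

lemma outside_chord_keeps_inside_out:
  assumes g_out: "open_arc g \<subseteq> outside (path_image c1 \<union> path_image c2)"
    and c2_not_in: "path_image c2 \<inter> inside (path_image c1 \<union> path_image g) = {}"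
    and z: "z \<in> inside (path_image c1 \<union> path_image c2)"
  shows "z \<in> outside (path_image c1 \<union> path_image g)"
proof -
  let ?U = "inside (path_image c1 \<union> path_image c2)"
  let ?I1 = "inside (path_image c1 \<union> path_image g)"
  have "path_image g \<subseteq> outside (path_image c1 \<union> path_image c2) \<union> path_image c1"
    using g_out path_image_eq_open_arc_Un[of g] ends by auto
  then have disj: "?U \<inter> (path_image c1 \<union> path_image g) = {}"
    using inside_no_overlap[of "path_image c1 \<union> path_image c2"] inside_Int_outside by blast
  have "z \<notin> ?I1"
  proof
    assume "z \<in> ?I1"
    have "?U \<subseteq> ?I1"
    proof (rule ccontr)
      assume "\<not> ?U \<subseteq> ?I1"
      then have "?U \<inter> frontier ?I1 \<noteq> {}"
        using connected_Int_frontier[of ?U ?I1] two_arcs_Jordan(2)[OF arcs(1,2) ends(1-4) c1_c2] z \<open>z \<in> ?I1\<close>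
        by blast
      then show False using frontier_inside_arcs_subset[OF arcs(1) arcs(3)] disj by blast
    qed
    let ?w = "c2 (1/2)"
    have w: "?w \<in> open_arc c2" by (rule arc_midpoint_in_open_arc[OF arcs(2)])
    then have "?w \<notin> path_image c1 \<union> path_image g"
      using c1_c2 c2_g ends unfolding open_arc_def by auto
    moreover have "?w \<in> frontier ?U"
      using w open_arc_subset_path_image two_arcs_Jordan(3)[OF arcs(1,2) ends(1-4) c1_c2] by blast
    then have "?w \<in> closure ?I1"
      using \<open>?U \<subseteq> ?I1\<close> closure_mono frontier_def by (metis Diff_iff subsetD)
    ultimately have "?w \<in> ?I1"
      using frontier_inside_arcs_subset[OF arcs(1) arcs(3)] by (auto simp: closure_Un_frontier)
    then show False using c2_not_in w open_arc_subset_path_image by blast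
  qed
  then show ?thesis using z disj by (auto simp: inside_outside)
qed

text \<open>If g runs outside the loop c1 \<union> c2, then one of c1, c2 runs inside the loop formed by
  the other one and g: otherwise a point z inside c1 \<union> c2 would have winding number zero
  around both c1 - g and c2 - g, hence also around c1 - c2.\<close>

lemma outside_chord_nests:
  assumes g_out: "open_arc g \<subseteq> outside (path_image c1 \<union> path_image c2)"
  shows "path_image c2 \<inter> inside (path_image c1 \<union> path_image g) \<noteq> {} \<or>
         path_image c1 \<inter> inside (path_image c2 \<union> path_image g) \<noteq> {}"
proof (rule ccontr)
  assume "\<not> ?thesis"
  then have c2_not_in: "path_image c2 \<inter> inside (path_image c1 \<union> path_image g) = {}"
    and c1_not_in: "path_image c1 \<inter> inside (path_image c2 \<union> path_image g) = {}" by auto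
  obtain z where z: "z \<in> inside (path_image c1 \<union> path_image c2)"
    using two_arcs_Jordan(1)[OF arcs(1,2) ends(1-4) c1_c2] by blast
  have z1: "z \<in> outside (path_image c1 \<union> path_image g)"
    by (rule outside_chord_keeps_inside_out[OF g_out c2_not_in z])
  have z2: "z \<in> outside (path_image c2 \<union> path_image g)"
    using theta_curve.outside_chord_keeps_inside_out[OF swap, of z] g_out c1_not_in z
    by (simp add: Un_commute)
  have z_off: "z \<notin> path_image c1" "z \<notin> path_image c2" "z \<notin> path_image g"
    using z1 z2 outside_no_overlap by blast+
  have paths: "path c1" "path c2" "path g" using arcs arc_imp_path by auto
  have loop1: "path (c1 +++ reversepath g)" and loop2: "path (c2 +++ reversepath g)"
    and loop12: "simple_path (c1 +++ reversepath c2)"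
    using two_arcs_loop(1)[OF arcs(1,3) ends(1,2,5,6) c1_g] two_arcs_loop(1)[OF arcs(2,3) ends(3-6) c2_g]
      two_arcs_loop(1)[OF arcs(1,2) ends(1-4) c1_c2] simple_path_imp_path by auto
  have "winding_number (c1 +++ reversepath g) z = 0"
    using winding_number_zero_in_outside[OF loop1] z1
      two_arcs_loop(2,3)[OF arcs(1,3) ends(1,2,5,6) c1_g] by simp
  moreover have "winding_number (c2 +++ reversepath g) z = 0"
    using winding_number_zero_in_outside[OF loop2] z2
      two_arcs_loop(2,3)[OF arcs(2,3) ends(3-6) c2_g] by simp
  moreover have "winding_number (c1 +++ reversepath c2) z \<noteq> 0"
    using simple_closed_path_winding_number_inside[OF loop12] z
      two_arcs_loop(2,3)[OF arcs(1,2) ends(1-4) c1_c2] by (metis one_neq_neg_one one_neq_zero neg_equal_0_iff_equal)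
  ultimately show False
    using winding_number_two_arcs_loop[OF paths(1,3) _ z_off(1,3)]
      winding_number_two_arcs_loop[OF paths(2,3) _ z_off(2,3)]
      winding_number_two_arcs_loop[OF paths(1,2) _ z_off(1,2)] ends by simp
qed

lemma outside_chord_separates_nested:
  assumes g_out: "open_arc g \<subseteq> outside (path_image c1 \<union> path_image c2)"
    and nested: "path_image c2 \<inter> inside (path_image c1 \<union> path_image g) \<noteq> {}"
    and T: "connected T" "T \<subseteq> outside (path_image c1 \<union> path_image c2)" "T \<inter> path_image g = {}"
    and p: "p \<in> closure T" "p \<in> path_image c1" "p \<notin> {a,b}"
    and q: "q \<in> closure T" "q \<in> path_image c2" "q \<notin> {a,b}"
  shows False
proof -
  let ?U = "inside (path_image c1 \<union> path_image g)"
  let ?W = "inside (path_image g \<union> path_image c2)"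
  let ?S = "inside (path_image c1 \<union> path_image c2)"
  obtain union: "?S \<union> ?W \<union> (path_image c2 - {a,b}) = ?U"
    by (rule split_inside_simple_closed_curve[of c1 a b g c2])
       (use arcs ends distinct_ends c1_c2 c1_g c2_g nested in \<open>auto simp: arc_imp_simple_path Int_commute\<close>)
  have T_off: "T \<inter> (path_image c1 \<union> path_image c2) = {}" "T \<inter> ?S = {}"
    using T(2) outside_no_overlap[of "path_image c1 \<union> path_image c2"] inside_Int_outside by blast+
  have "q \<in> ?U" using union q by blast
  then have "T \<inter> ?U \<noteq> {}"
    using open_Int_closure_eq_empty[OF open_inside_arcs[OF arcs(1) arcs(3)]] q by auto
  moreover have "T \<inter> frontier ?U = {}"
    using frontier_inside_arcs_subset[OF arcs(1) arcs(3)] T T_off by blast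
  ultimately have "T \<subseteq> ?U" using connected_Int_frontier[OF T(1), of ?U] by blast
  then have "T \<subseteq> ?W" using union T_off by blast
  then have "p \<in> closure ?W" using p closure_mono by blast
  then have "p \<in> ?W \<union> path_image g \<union> path_image c2"
    using frontier_inside_arcs_subset[OF arcs(3) arcs(2)] by (auto simp: closure_Un_frontier)
  moreover have "p \<notin> path_image g \<union> path_image c2" using p c1_c2 c1_g by blast
  moreover have "p \<notin> ?U" using p inside_no_overlap[of "path_image c1 \<union> path_image g"] by blast
  ultimately show False using union by blast
qed

lemma outside_chord_separates:
  assumes g_out: "open_arc g \<subseteq> outside (path_image c1 \<union> path_image c2)"
    and T: "connected T" "T \<subseteq> outside (path_image c1 \<union> path_image c2)" "T \<inter> path_image g = {}"
    and p: "p \<in> closure T" "p \<in> path_image c1" "p \<notin> {a,b}"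
    and q: "q \<in> closure T" "q \<in> path_image c2" "q \<notin> {a,b}"
  shows False
  using outside_chord_nests[OF g_out]
proof
  assume "path_image c2 \<inter> inside (path_image c1 \<union> path_image g) \<noteq> {}"
  then show False using outside_chord_separates_nested[OF g_out _ T p q] by blast
next
  assume "path_image c1 \<inter> inside (path_image c2 \<union> path_image g) \<noteq> {}"
  then show False
    using theta_curve.outside_chord_separates_nested[OF swap, of T q p] g_out T p q
    by (simp add: Un_commute)
qed

end

section \<open>Cycles of arcs\<close>

fun arc_walk :: "nat \<Rightarrow> (nat \<Rightarrow> real \<Rightarrow> complex) \<Rightarrow> nat \<Rightarrow> nat \<Rightarrow> real \<Rightarrow> complex" where
  "arc_walk N \<gamma> r 0 = \<gamma> r"
| "arc_walk N \<gamma> r (Suc m) = \<gamma> r +++ arc_walk N \<gamma> (Suc r mod N) m"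

lemma mod_add_neq:
  assumes "r < N" "0 < d" "d < N"
  shows "(r + d) mod N \<noteq> (r::nat)"
proof (cases "r + d < N")
  case False
  with assms have "(r + d) mod N = r + d - N" by (simp add: mod_if le_mod_geq)
  with assms False show ?thesis by linarith
qed (use assms in simp)

lemma image_mod_shift_no_wrap:
  assumes "a < (b::nat)" "b \<le> N"
  shows "(\<lambda>t. (a + t) mod N) ` {..b - a - 1} = {a..<b}"
proof (intro equalityI subsetI)
  fix x assume "x \<in> {a..<b}"
  then have "x = (a + (x - a)) mod N" "x - a \<in> {..b - a - 1}" using assms by auto
  then show "x \<in> (\<lambda>t. (a + t) mod N) ` {..b - a - 1}" by blast
qed (use assms in auto)

lemma image_mod_shift_wrap:
  assumes "a < (b::nat)" "b < N"
  shows "(\<lambda>t. (b + t) mod N) ` {..N - b + a - 1} = {e. e < N \<and> (b \<le> e \<or> e < a)}"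
proof (intro equalityI subsetI)
  fix x assume "x \<in> (\<lambda>t. (b + t) mod N) ` {..N - b + a - 1}"
  then obtain t where t: "t \<le> N - b + a - 1" "x = (b + t) mod N" by auto
  show "x \<in> {e. e < N \<and> (b \<le> e \<or> e < a)}"
  proof (cases "b + t < N")
    case False
    then have "x = b + t - N" using t assms by (simp add: le_mod_geq)
    then show ?thesis using t assms False by auto
  qed (use t in simp)
next
  fix x assume x: "x \<in> {e. e < N \<and> (b \<le> e \<or> e < a)}"
  show "x \<in> (\<lambda>t. (b + t) mod N) ` {..N - b + a - 1}"
  proof (cases "b \<le> x")
    case True
    then have "x = (b + (x - b)) mod N" "x - b \<in> {..N - b + a - 1}" using assms x by auto
    then show ?thesis by blast
  next
    case False
    then have "x = (b + (x + N - b)) mod N" "x + N - b \<in> {..N - b + a - 1}" using assms x by auto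
    then show ?thesis by blast
  qed
qed

lemma common_corner_of_sides:
  assumes "a < (b::nat)" "b < N" "a \<le> e1" "e1 < b" "e2 < N" "b \<le> e2 \<or> e2 < a"
    and "x \<in> {e1, Suc e1 mod N} \<inter> {e2, Suc e2 mod N}"
  shows "x = a \<or> x = b"
proof -
  have "Suc e1 mod N = Suc e1" using assms by simp
  then have "a \<le> x" "x \<le> b" using assms by auto
  moreover have "Suc e2 mod N = (if Suc e2 = N then 0 else Suc e2)" using assms(5) by auto
  ultimately show ?thesis
    using assms by (auto split: if_splits)
qed

locale arc_cycle =
  fixes N :: nat and Q :: "nat \<Rightarrow> complex" and \<gamma> :: "nat \<Rightarrow> real \<Rightarrow> complex"
  assumes inj_Q: "inj_on Q {..<N}"
    and arc: "\<And>r. r < N \<Longrightarrow> arc (\<gamma> r)"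
    and start: "\<And>r. r < N \<Longrightarrow> pathstart (\<gamma> r) = Q r"
    and finish: "\<And>r. r < N \<Longrightarrow> pathfinish (\<gamma> r) = Q (Suc r mod N)"
    and arcs_Int: "\<And>r r'. r < N \<Longrightarrow> r' < N \<Longrightarrow> r \<noteq> r' \<Longrightarrow>
        path_image (\<gamma> r) \<inter> path_image (\<gamma> r') \<subseteq> Q ` ({r, Suc r mod N} \<inter> {r', Suc r' mod N})"
begin

lemma arc_walk:
  assumes "r < N" "m + 1 < N"
  shows "arc (arc_walk N \<gamma> r m) \<and> pathstart (arc_walk N \<gamma> r m) = Q r \<and>
         pathfinish (arc_walk N \<gamma> r m) = Q ((r + m + 1) mod N) \<and>
         path_image (arc_walk N \<gamma> r m) = (\<Union>t\<in>{..m}. path_image (\<gamma> ((r + t) mod N)))"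
  using assms
proof (induction m arbitrary: r)
  case 0
  then show ?case using arc start finish by simp
next
  case (Suc m)
  define r' where "r' = Suc r mod N"
  have IH: "arc (arc_walk N \<gamma> r' m) \<and> pathstart (arc_walk N \<gamma> r' m) = Q r' \<and>
         pathfinish (arc_walk N \<gamma> r' m) = Q ((r' + m + 1) mod N) \<and>
         path_image (arc_walk N \<gamma> r' m) = (\<Union>t\<in>{..m}. path_image (\<gamma> ((r' + t) mod N)))"
    using Suc r'_def by simp
  have shift: "(r' + t) mod N = (r + Suc t) mod N" for t
    unfolding r'_def by (simp add: mod_add_left_eq)
  have img: "path_image (arc_walk N \<gamma> r (Suc m)) = (\<Union>t\<in>{..Suc m}. path_image (\<gamma> ((r + t) mod N)))"
  proof -
    have "path_image (arc_walk N \<gamma> r (Suc m)) = path_image (\<gamma> r) \<union> path_image (arc_walk N \<gamma> r' m)"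
      using IH Suc.prems finish by (simp add: path_image_join r'_def)
    also have "\<dots> = path_image (\<gamma> ((r + 0) mod N)) \<union> (\<Union>t\<in>{..m}. path_image (\<gamma> ((r + Suc t) mod N)))"
      using IH Suc.prems by (simp add: shift)
    also have "\<dots> = (\<Union>t\<in>{..Suc m}. path_image (\<gamma> ((r + t) mod N)))"
      by (auto simp: atMost_Suc_eq_insert_0)
    finally show ?thesis .
  qed
  have "path_image (\<gamma> r) \<inter> path_image (\<gamma> ((r + Suc t) mod N)) \<subseteq> {Q r'}" if "t \<le> m" for t
  proof -
    define e where "e = (r + Suc t) mod N"
    have "Suc e mod N = (r + Suc (Suc t)) mod N" unfolding e_def by (simp add: mod_Suc_eq)
    then have ne: "e \<noteq> r" "Suc e mod N \<noteq> r"
      unfolding e_def using Suc.prems that mod_add_neq[of r N "Suc t"] mod_add_neq[of r N "Suc (Suc t)"]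
      by auto
    then have "{r, Suc r mod N} \<inter> {e, Suc e mod N} \<subseteq> {r'}" using r'_def by auto
    moreover have "e < N" using Suc.prems e_def by simp
    ultimately show ?thesis using arcs_Int[OF Suc.prems(1), of e] ne e_def by blast
  qed
  then have "path_image (\<gamma> r) \<inter> path_image (arc_walk N \<gamma> r' m) \<subseteq> {pathstart (arc_walk N \<gamma> r' m)}"
    using IH by (auto simp: shift)
  then have "arc (arc_walk N \<gamma> r (Suc m))"
    using arc_join[of "\<gamma> r" "arc_walk N \<gamma> r' m"] IH arc finish Suc.prems by (simp add: r'_def)
  moreover have "(r' + m + 1) mod N = (r + Suc m + 1) mod N" using shift[of "m + 1"] by simp
  ultimately show ?case
    using img IH start Suc.prems by (simp add: r'_def[symmetric])
qed

lemma cycle_split_at_corners: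
  assumes ab: "a < b" "b < N"
  obtains c1 c2 where "arc c1" "pathstart c1 = Q a" "pathfinish c1 = Q b"
    "arc c2" "pathstart c2 = Q a" "pathfinish c2 = Q b"
    "path_image c1 = (\<Union>e\<in>{a..<b}. path_image (\<gamma> e))"
    "path_image c2 = (\<Union>e\<in>{e. e < N \<and> (b \<le> e \<or> e < a)}. path_image (\<gamma> e))"
    "path_image c1 \<inter> path_image c2 = {Q a, Q b}"
proof -
  define c1 where "c1 = arc_walk N \<gamma> a (b - a - 1)"
  define c2 where "c2 = reversepath (arc_walk N \<gamma> b (N - b + a - 1))"
  define E1 where "E1 = {a..<b}"
  define E2 where "E2 = {e. e < N \<and> (b \<le> e \<or> e < a)}"
  have "E1 = (\<lambda>t. (a + t) mod N) ` {..b - a - 1}"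
    unfolding E1_def using ab by (intro image_mod_shift_no_wrap[symmetric]) auto
  then have "(\<Union>t\<in>{..b - a - 1}. path_image (\<gamma> ((a + t) mod N))) = (\<Union>e\<in>E1. path_image (\<gamma> e))"
    by (simp only: image_image)
  moreover have "arc c1 \<and> pathstart c1 = Q a \<and> pathfinish c1 = Q b \<and>
      path_image c1 = (\<Union>t\<in>{..b - a - 1}. path_image (\<gamma> ((a + t) mod N)))"
    using arc_walk[of a "b - a - 1"] ab unfolding c1_def by auto
  ultimately have w1: "arc c1" "pathstart c1 = Q a" "pathfinish c1 = Q b"
    "path_image c1 = (\<Union>e\<in>E1. path_image (\<gamma> e))" by auto
  have "E2 = (\<lambda>t. (b + t) mod N) ` {..N - b + a - 1}"
    unfolding E2_def using ab by (intro image_mod_shift_wrap[symmetric]) auto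
  then have "(\<Union>t\<in>{..N - b + a - 1}. path_image (\<gamma> ((b + t) mod N))) = (\<Union>e\<in>E2. path_image (\<gamma> e))"
    by (simp only: image_image)
  moreover have "arc c2 \<and> pathstart c2 = Q a \<and> pathfinish c2 = Q b \<and>
      path_image c2 = (\<Union>t\<in>{..N - b + a - 1}. path_image (\<gamma> ((b + t) mod N)))"
    using arc_walk[of b "N - b + a - 1"] ab unfolding c2_def by (auto simp: arc_reversepath)
  ultimately have w2: "arc c2" "pathstart c2 = Q a" "pathfinish c2 = Q b"
    "path_image c2 = (\<Union>e\<in>E2. path_image (\<gamma> e))" by auto
  have ends_on: "Q a \<in> path_image c1" "Q b \<in> path_image c1" "Q a \<in> path_image c2" "Q b \<in> path_image c2"
    using w1 w2 by (metis pathstart_in_path_image pathfinish_in_path_image)+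
  have c1_c2: "path_image c1 \<inter> path_image c2 = {Q a, Q b}"
  proof
    show "path_image c1 \<inter> path_image c2 \<subseteq> {Q a, Q b}"
    proof
      fix x assume "x \<in> path_image c1 \<inter> path_image c2"
      then obtain e1 e2 where e: "e1 \<in> E1" "e2 \<in> E2" "x \<in> path_image (\<gamma> e1)" "x \<in> path_image (\<gamma> e2)"
        unfolding w1(4) w2(4) by blast
      then have "e1 \<noteq> e2" "e1 < N" "e2 < N" using ab unfolding E1_def E2_def by auto
      then obtain y where "y \<in> {e1, Suc e1 mod N} \<inter> {e2, Suc e2 mod N}" "x = Q y"
        using arcs_Int[of e1 e2] e by blast
      then show "x \<in> {Q a, Q b}"
        using common_corner_of_sides[of a b N e1 e2 y] e ab unfolding E1_def E2_def by auto
    qed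
  qed (use ends_on in auto)
  show thesis
    using w1(4) w2(4) c1_c2 unfolding E1_def E2_def by (rule that[OF w1(1-3) w2(1-3)])
qed

text \<open>Two disjoint chords lying on the same side of the cycle cannot have interleaving ends:
  the corners Q a, Q b of the first chord cut the cycle into two arcs forming a theta curve with
  it, and the second chord would connect interior points of both arcs without meeting the first.\<close>

lemma no_interleaving_chords:
  defines "C \<equiv> \<Union>r<N. path_image (\<gamma> r)"
  assumes abkl: "a < k" "k < b" "b < l" "l < N"
    and g: "arc g" "pathstart g = Q a" "pathfinish g = Q b" "path_image g \<inter> C \<subseteq> {Q a, Q b}"
    and h: "arc h" "Q k \<in> path_image h" "Q l \<in> path_image h"
    and disjoint: "path_image g \<inter> path_image h = {}"
    and same_side: "(open_arc g \<subseteq> inside C \<and> open_arc h \<subseteq> inside C) \<or>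
      (open_arc g \<subseteq> outside C \<and> open_arc h \<subseteq> outside C)"
  shows False
proof -
  have "a < b" "b < N" using abkl by simp_all
  then obtain c1 c2 where w1: "arc c1" "pathstart c1 = Q a" "pathfinish c1 = Q b"
    and w2: "arc c2" "pathstart c2 = Q a" "pathfinish c2 = Q b"
    and img1: "path_image c1 = (\<Union>e\<in>{a..<b}. path_image (\<gamma> e))"
    and img2: "path_image c2 = (\<Union>e\<in>{e. e < N \<and> (b \<le> e \<or> e < a)}. path_image (\<gamma> e))"
    and c1_c2: "path_image c1 \<inter> path_image c2 = {Q a, Q b}"
    by (rule cycle_split_at_corners)
  have Q_ne: "Q x \<noteq> Q y" if "x < N" "y < N" "x \<noteq> y" for x y
    using inj_Q that by (auto dest: inj_onD)
  have Q_ab: "Q a \<noteq> Q b" "Q k \<notin> {Q a, Q b}" "Q l \<notin> {Q a, Q b}"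
    using Q_ne[of a b] Q_ne[of k a] Q_ne[of k b] Q_ne[of l a] Q_ne[of l b] abkl by auto
  have "{..<N} = {a..<b} \<union> {e. e < N \<and> (b \<le> e \<or> e < a)}" using abkl by auto
  then have C_eq: "C = path_image c1 \<union> path_image c2" unfolding C_def img1 img2 by blast
  have ends_on: "Q a \<in> path_image c1" "Q b \<in> path_image c1" "Q a \<in> path_image c2" "Q b \<in> path_image c2"
    using w1 w2 by (metis pathstart_in_path_image pathfinish_in_path_image)+
  have c_g: "path_image c1 \<inter> path_image g = {Q a, Q b}" "path_image c2 \<inter> path_image g = {Q a, Q b}"
    using g(4) ends_on g(2,3) pathstart_in_path_image[of g] pathfinish_in_path_image[of g]
    unfolding C_eq by auto
  interpret theta_curve c1 c2 g "Q a" "Q b"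
    using w1 w2 g Q_ab c1_c2 c_g by unfold_locales auto
  have on_sides: "Q k \<in> path_image c1" "Q l \<in> path_image c2"
    using abkl start[of k] start[of l] pathstart_in_path_image[of "\<gamma> k"] pathstart_in_path_image[of "\<gamma> l"]
    unfolding img1 img2 by auto
  have T: "connected (open_arc h)" "open_arc h \<inter> path_image g = {}"
    using connected_open_arc[OF h(1)] disjoint open_arc_subset_path_image by auto
  have cl: "Q k \<in> closure (open_arc h)" "Q l \<in> closure (open_arc h)"
    using path_image_subset_closure_open_arc[OF h(1)] h by auto
  from same_side show False
    unfolding C_eq
    using inside_chord_separates[OF _ T(1) _ T(2) cl(1) on_sides(1) Q_ab(2) cl(2) on_sides(2) Q_ab(3)]
      outside_chord_separates[OF _ T(1) _ T(2) cl(1) on_sides(1) Q_ab(2) cl(2) on_sides(2) Q_ab(3)]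
    by blast
qed

end

section \<open>Orientation and the exploding double chain\<close>

definition orient :: "complex \<Rightarrow> complex \<Rightarrow> complex \<Rightarrow> real" where
  "orient a b c = Re (b - a) * Im (c - a) - Im (b - a) * Re (c - a)"

lemma orient_swap: "orient a b c = - orient a c b"
  by (simp add: orient_def algebra_simps)

lemma orient_rotate: "orient a b c = orient b c a"
  by (simp add: orient_def algebra_simps)

lemma orient_convex_combination:
  "orient a b ((1 - u) *\<^sub>R c + u *\<^sub>R d) = (1 - u) * orient a b c + u * orient a b d"
  by (simp add: orient_def algebra_simps)

lemma orient_closed_segment:
  assumes "x \<in> closed_segment a b"
  shows "orient a b x = 0"
proof -
  obtain u where x: "x = (1 - u) *\<^sub>R a + u *\<^sub>R b" using assms by (auto simp: in_segment)
  show ?thesis unfolding x by (simp add: orient_def algebra_simps)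
qed

lemma Re_closed_segment_bounds:
  assumes "x \<in> closed_segment a b" "Re a \<le> Re b"
  shows "Re a \<le> Re x \<and> Re x \<le> Re b"
proof -
  obtain u where u: "0 \<le> u" "u \<le> 1" "x = (1 - u) *\<^sub>R a + u *\<^sub>R b"
    using assms(1) by (auto simp: in_segment)
  have "Re x = Re a + u * (Re b - Re a)" unfolding u(3) by (simp add: algebra_simps)
  moreover have "0 \<le> u * (Re b - Re a)" "u * (Re b - Re a) \<le> Re b - Re a"
    using u assms(2) by (simp_all add: mult_left_le_one_le)
  ultimately show ?thesis by linarith
qed

lemma closed_segments_disjoint_same_side:
  assumes "0 < orient a b c * t" "0 < orient a b d * t"
  shows "closed_segment a b \<inter> closed_segment c d = {}"
proof -
  have "0 < orient a b ((1 - u) *\<^sub>R c + u *\<^sub>R d) * t" if u: "0 \<le> u" "u \<le> 1" for u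
  proof (cases "u = 0")
    case False
    then have "0 < u * (orient a b d * t)" using u assms by simp
    moreover have "0 \<le> (1 - u) * (orient a b c * t)" using u assms by simp
    ultimately show ?thesis
      unfolding orient_convex_combination by (simp add: algebra_simps)
  qed (use assms in simp)
  then have "0 < orient a b x * t" if "x \<in> closed_segment c d" for x
    using that by (auto simp: in_segment)
  then show ?thesis using orient_closed_segment by force
qed

lemma closed_segments_common_end:
  assumes "orient a b c \<noteq> 0"
  shows "closed_segment a c \<inter> closed_segment b c \<subseteq> {c}"
proof
  fix x assume "x \<in> closed_segment a c \<inter> closed_segment b c"
  then obtain u v where u: "0 \<le> u" "x = (1 - u) *\<^sub>R c + u *\<^sub>R a"
    and v: "x = (1 - v) *\<^sub>R c + v *\<^sub>R b"
    by (auto simp: in_segment closed_segment_commute[of _ c])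
  then have eq: "u *\<^sub>R (a - c) = v *\<^sub>R (b - c)" by (simp add: algebra_simps)
  have h: "u * Re (a - c) = v * Re (b - c)" "u * Im (a - c) = v * Im (b - c)"
    using arg_cong[OF eq, of Re] arg_cong[OF eq, of Im] by simp_all
  have "u * orient a b c = (u * Re (a - c)) * Im (b - c) - (u * Im (a - c)) * Re (b - c)"
    by (simp add: orient_def algebra_simps)
  also have "\<dots> = (v * Re (b - c)) * Im (b - c) - (v * Im (b - c)) * Re (b - c)"
    unfolding h ..
  also have "\<dots> = 0" by (simp add: algebra_simps)
  finally have "u * orient a b c = 0" .
  then show "x \<in> {c}" using assms u by simp
qed

lemma exploding_chain_orient:
  assumes "exploding_double_chain y" "3 \<le> m"
    and "a \<in> Hset y (m - 1)" "b \<in> Hset y (m - 1)" "Re a < Re b"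
  shows "0 < orient a b (pt y m)" "orient a b (qt y m) < 0"
proof -
  define D where "D = Re b - Re a"
  define L where "L = Im a + (Im b - Im a) * (real m - Re a) / D"
  have "m - 1 \<ge> 2" using assms(2) by simp
  then have "\<bar>Im a + (Im b - Im a) * (real (Suc (m - 1)) - Re a) / (Re b - Re a)\<bar> < y (Suc (m - 1))"
    using assms(1,3-5) unfolding exploding_double_chain_def by force
  moreover have "Suc (m - 1) = m" using assms(2) by simp
  ultimately have "\<bar>L\<bar> < y m" by (simp add: L_def D_def)
  moreover have "D > 0" using assms(5) by (simp add: D_def)
  moreover have "orient a b (pt y m) = D * (y m - L)" "orient a b (qt y m) = D * (- y m - L)"
    using \<open>D > 0\<close> by (simp_all add: orient_def pt_def qt_def L_def D_def field_simps)
  ultimately show "0 < orient a b (pt y m)" "orient a b (qt y m) < 0"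
    by (simp_all add: mult_pos_neg abs_less_iff)
qed

definition chain_point :: "(nat \<Rightarrow> real) \<Rightarrow> (nat \<Rightarrow> bool) \<Rightarrow> nat \<Rightarrow> complex" where
  "chain_point y s i = (if s i then pt y i else qt y i)"

definition side_sign :: "bool \<Rightarrow> real" where
  "side_sign b = (if b then 1 else -1)"

lemma Re_chain_point [simp]: "Re (chain_point y s i) = real i"
  by (simp add: chain_point_def pt_def qt_def)

lemma inj_chain_point: "inj (chain_point y s)"
  by (rule injI) (metis Re_chain_point of_nat_eq_iff)

lemma chain_point_in_Hset: "1 \<le> i \<Longrightarrow> i \<le> n \<Longrightarrow> chain_point y s i \<in> Hset y n"
  by (auto simp: chain_point_def Hset_def)

lemma chain_orient:
  assumes "exploding_double_chain y" "1 \<le> i" "i < j" "j < m"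
  shows "0 < orient (chain_point y s i) (chain_point y s j) (chain_point y s m) * side_sign (s m)"
proof -
  have m: "3 \<le> m" and Re_lt: "Re (chain_point y s i) < Re (chain_point y s j)" using assms by auto
  have "chain_point y s i \<in> Hset y (m - 1)" "chain_point y s j \<in> Hset y (m - 1)"
    using assms by (auto intro!: chain_point_in_Hset)
  note side = exploding_chain_orient[OF assms(1) m this Re_lt]
  show ?thesis
    using side by (cases "s m") (simp_all add: side_sign_def chain_point_def[of y s m])
qed

lemma side_sign_neq: "b1 \<noteq> b2 \<Longrightarrow> side_sign b1 = - side_sign b2"
  by (auto simp: side_sign_def)

lemma chain_segments_common_right_end:
  fixes y :: "nat \<Rightarrow> real" and s :: "nat \<Rightarrow> bool"
  defines "P \<equiv> chain_point y s"
  assumes ex: "exploding_double_chain y"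
    and "1 \<le> i" "i < j" "1 \<le> k" "k < j" "i \<noteq> k"
  shows "closed_segment (P i) (P j) \<inter> closed_segment (P k) (P j) \<subseteq> {P j}"
proof (cases "i < k")
  case True
  then have "orient (P i) (P k) (P j) \<noteq> 0"
    using chain_orient[OF ex \<open>1 \<le> i\<close> True \<open>k < j\<close>, of s] unfolding P_def by auto
  then show ?thesis by (rule closed_segments_common_end)
next
  case False
  then have "k < i" using assms by auto
  then have "orient (P k) (P i) (P j) \<noteq> 0"
    using chain_orient[OF ex \<open>1 \<le> k\<close> \<open>k < i\<close> \<open>i < j\<close>, of s] unfolding P_def by auto
  then show ?thesis using closed_segments_common_end by blast
qed

text \<open>Two segments of the chain with right ends j < l can only cross when i < k < j and both
  right ends are on the same side: otherwise the explosion puts both ends of one segment strictly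
  on one side of the line through the other one.\<close>

lemma chain_segments_Int_ordered:
  fixes y :: "nat \<Rightarrow> real" and s :: "nat \<Rightarrow> bool"
  defines "P \<equiv> chain_point y s"
  assumes ex: "exploding_double_chain y"
    and ij: "1 \<le> i" "i < j" and kl: "1 \<le> k" "k < l" and "j < l"
    and sides: "i < k \<Longrightarrow> k < j \<Longrightarrow> s j \<noteq> s l"
  shows "closed_segment (P i) (P j) \<inter> closed_segment (P k) (P l) \<subseteq> P ` ({i,j} \<inter> {k,l})"
proof -
  have ijl: "0 < orient (P i) (P j) (P l) * side_sign (s l)"
    unfolding P_def using chain_orient[OF ex ij \<open>j < l\<close>] .
  consider "k = i" | "k = j" | "j < k" | "k < i" | "i < k" "k < j" by linarith
  then show ?thesis
  proof cases
    case 1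
    have "orient (P j) (P l) (P i) \<noteq> 0" using ijl orient_rotate[of "P i" "P j" "P l"] by auto
    then have "closed_segment (P j) (P i) \<inter> closed_segment (P l) (P i) \<subseteq> {P i}"
      by (rule closed_segments_common_end)
    then show ?thesis using 1 by (auto simp: closed_segment_commute)
  next
    case 2
    have "orient (P i) (P l) (P j) \<noteq> 0" using ijl orient_swap[of "P i" "P l" "P j"] by auto
    then have "closed_segment (P i) (P j) \<inter> closed_segment (P l) (P j) \<subseteq> {P j}"
      by (rule closed_segments_common_end)
    then show ?thesis using 2 by (auto simp: closed_segment_commute)
  next
    case 3
    have "Re x \<le> real j" if "x \<in> closed_segment (P i) (P j)" for x
      using Re_closed_segment_bounds[OF that] ij by (simp add: P_def)
    moreover have "real k \<le> Re x" if "x \<in> closed_segment (P k) (P l)" for x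
      using Re_closed_segment_bounds[OF that] kl by (simp add: P_def)
    ultimately have "closed_segment (P i) (P j) \<inter> closed_segment (P k) (P l) = {}"
      using 3 by fastforce
    then show ?thesis by simp
  next
    case 4
    have "0 < orient (P k) (P i) (P l) * side_sign (s l)" "0 < orient (P k) (P j) (P l) * side_sign (s l)"
      unfolding P_def using 4 ij \<open>j < l\<close>
      by (auto intro: chain_orient[OF ex kl(1)])
    then have "0 < orient (P k) (P l) (P i) * - side_sign (s l)" "0 < orient (P k) (P l) (P j) * - side_sign (s l)"
      using orient_swap[of "P k" "P l" "P i"] orient_swap[of "P k" "P l" "P j"] by simp_all
    then have "closed_segment (P k) (P l) \<inter> closed_segment (P i) (P j) = {}"
      by (rule closed_segments_disjoint_same_side)
    then show ?thesis by auto
  next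
    case 5
    have "0 < orient (P i) (P k) (P j) * side_sign (s j)"
      unfolding P_def using chain_orient[OF ex ij(1) 5] .
    then have "0 < orient (P i) (P j) (P k) * side_sign (s l)"
      using orient_swap[of "P i" "P j" "P k"] side_sign_neq[OF sides[OF 5]] by simp
    then have "closed_segment (P i) (P j) \<inter> closed_segment (P k) (P l) = {}"
      using ijl by (rule closed_segments_disjoint_same_side)
    then show ?thesis by simp
  qed
qed

lemma chain_segments_Int:
  fixes y :: "nat \<Rightarrow> real" and s :: "nat \<Rightarrow> bool"
  defines "P \<equiv> chain_point y s"
  assumes ex: "exploding_double_chain y"
    and ij: "1 \<le> i" "i < j" and kl: "1 \<le> k" "k < l" and "(i, j) \<noteq> (k, l)"
    and sides: "i < k \<Longrightarrow> k < j \<Longrightarrow> j < l \<Longrightarrow> s j \<noteq> s l"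
      "k < i \<Longrightarrow> i < l \<Longrightarrow> l < j \<Longrightarrow> s l \<noteq> s j"
  shows "closed_segment (P i) (P j) \<inter> closed_segment (P k) (P l) \<subseteq> P ` ({i,j} \<inter> {k,l})"
proof -
  consider "j = l" | "j < l" | "l < j" by linarith
  then show ?thesis
  proof cases
    case 1
    then have "closed_segment (P i) (P j) \<inter> closed_segment (P k) (P j) \<subseteq> {P j}"
      unfolding P_def using chain_segments_common_right_end[OF ex ij(1,2) kl(1)] kl(2) assms(7) by auto
    then show ?thesis using 1 by auto
  next
    case 2
    then show ?thesis
      unfolding P_def using chain_segments_Int_ordered[OF ex ij kl 2] sides(1) by auto
  next
    case 3
    then show ?thesis
      unfolding P_def using chain_segments_Int_ordered[OF ex kl ij 3] sides(2) by (auto simp: Int_commute)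
  qed
qed

lemma chain_point_on_segment:
  assumes ex: "exploding_double_chain y" and "1 \<le> i" "i < j" "1 \<le> m"
    and on: "chain_point y s m \<in> closed_segment (chain_point y s i) (chain_point y s j)"
  shows "m = i \<or> m = j"
proof (rule ccontr)
  assume "\<not> (m = i \<or> m = j)"
  moreover have "real i \<le> real m" "real m \<le> real j"
    using Re_closed_segment_bounds[OF on] assms by auto
  ultimately have "i < m" "m < j" by auto
  then have "0 < orient (chain_point y s i) (chain_point y s m) (chain_point y s j) * side_sign (s j)"
    by (rule chain_orient[OF ex \<open>1 \<le> i\<close>])
  moreover have "orient (chain_point y s i) (chain_point y s j) (chain_point y s m) = 0"
    by (rule orient_closed_segment[OF on])
  ultimately show False
    using orient_swap[of "chain_point y s i" "chain_point y s j" "chain_point y s m"] by simp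
qed

lemma simple_graph_edge_indices:
  fixes n :: nat
  assumes "simple_graph V E" "bij_betw v {1..n} V" "e \<in> E"
  obtains i j where "1 \<le> i" "i < j" "j \<le> n" "e = {v i, v j}"
proof -
  obtain u w where "u \<in> V" "w \<in> V" "u \<noteq> w" "e = {u, w}"
    using assms(1,3) unfolding simple_graph_def by blast
  moreover have "V = v ` {1..n}" using assms(2) by (simp add: bij_betw_def)
  ultimately obtain i j where ij: "i \<in> {1..n}" "j \<in> {1..n}" "i \<noteq> j" "e = {v i, v j}" by blast
  then have "i < j \<or> j < i" by linarith
  then show ?thesis
    using that ij by (auto simp: insert_commute)
qed

lemma straight_line_plane_chain:
  assumes ex: "exploding_double_chain y" and bij: "bij_betw v {1..n} V" and G: "simple_graph V E"
    and sides: "\<And>i k j l. 1 \<le> i \<Longrightarrow> i < k \<Longrightarrow> k < j \<Longrightarrow> j < l \<Longrightarrow> l \<le> n \<Longrightarrow>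
      {v i, v j} \<in> E \<Longrightarrow> {v k, v l} \<in> E \<Longrightarrow> s j \<noteq> s l"
  shows "straight_line_plane V E (\<lambda>x. chain_point y s (inv_into {1..n} v x))"
proof -
  define P where "P = chain_point y s"
  define pos where "pos x = P (inv_into {1..n} v x)" for x
  have pos_v: "pos (v i) = P i" if "i \<in> {1..n}" for i
    using bij_betw_inv_into_left[OF bij that] by (simp add: pos_def)
  have hull: "convex hull (pos ` {v i, v j}) = closed_segment (P i) (P j)"
    if "i \<in> {1..n}" "j \<in> {1..n}" for i j
    using that by (simp add: pos_v segment_convex_hull)
  have inv_v: "inv_into {1..n} v x \<in> {1..n}" "v (inv_into {1..n} v x) = x" if "x \<in> V" for x
    using that bij by (auto simp: bij_betw_def inv_into_into f_inv_into_f)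
  have "inj_on pos V"
    unfolding pos_def P_def
    using inj_on_inv_into[of V v "{1..n}"] bij inj_chain_point[of y s]
    by (auto simp: bij_betw_def inj_on_def)
  moreover have "x \<in> e" if "e \<in> E" "x \<in> V" and on: "pos x \<in> convex hull (pos ` e)" for e x
  proof -
    obtain i j where ij: "1 \<le> i" "i < j" "j \<le> n" "e = {v i, v j}"
      using simple_graph_edge_indices[OF G bij \<open>e \<in> E\<close>] .
    have "P (inv_into {1..n} v x) \<in> closed_segment (P i) (P j)"
      using on hull[of i j] ij by (simp add: pos_def)
    then have "inv_into {1..n} v x = i \<or> inv_into {1..n} v x = j"
      unfolding P_def using chain_point_on_segment[OF ex ij(1,2)] inv_v[OF \<open>x \<in> V\<close>] by auto
    then show "x \<in> e" using inv_v[OF \<open>x \<in> V\<close>] ij by auto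
  qed
  moreover have "convex hull (pos ` e) \<inter> convex hull (pos ` f) \<subseteq> pos ` (e \<inter> f)"
    if "e \<in> E" "f \<in> E" "e \<noteq> f" for e f
  proof -
    obtain i j where ij: "1 \<le> i" "i < j" "j \<le> n" "e = {v i, v j}"
      using simple_graph_edge_indices[OF G bij \<open>e \<in> E\<close>] .
    obtain k l where kl: "1 \<le> k" "k < l" "l \<le> n" "f = {v k, v l}"
      using simple_graph_edge_indices[OF G bij \<open>f \<in> E\<close>] .
    have idx: "{i, j, k, l} \<subseteq> {1..n}" using ij kl by auto
    have "(i, j) \<noteq> (k, l)" using \<open>e \<noteq> f\<close> ij kl by auto
    have "closed_segment (P i) (P j) \<inter> closed_segment (P k) (P l) \<subseteq> P ` ({i, j} \<inter> {k, l})"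
      unfolding P_def
      by (rule chain_segments_Int[OF ex ij(1,2) kl(1,2) \<open>(i, j) \<noteq> (k, l)\<close>])
         (use sides[of i k j l] sides[of k i l j] ij kl that in auto)
    moreover have "P ` ({i, j} \<inter> {k, l}) = (\<lambda>t. pos (v t)) ` ({i, j} \<inter> {k, l})"
      using idx pos_v by (intro image_cong) auto
    moreover have "\<dots> \<subseteq> pos ` (e \<inter> f)" using ij kl by auto
    ultimately show ?thesis using hull idx ij kl by simp
  qed
  ultimately show ?thesis
    unfolding straight_line_plane_def pos_def P_def by blast
qed

lemma plane_drawingD:
  assumes "plane_drawing V E pos c"
  shows "inj_on pos V"
    and "e \<in> E \<Longrightarrow> arc (c e)"
    and "e \<in> E \<Longrightarrow> {pathstart (c e), pathfinish (c e)} = pos ` e"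
    and "e \<in> E \<Longrightarrow> f \<in> E \<Longrightarrow> e \<noteq> f \<Longrightarrow> path_image (c e) \<inter> path_image (c f) \<subseteq> pos ` (e \<inter> f)"
  using assms unfolding plane_drawing_def Ball_def by (elim conjE; blast)+

lemma plane_drawing_ends_on_arc:
  assumes "plane_drawing V E pos c" "e \<in> E" "x \<in> e"
  shows "pos x \<in> path_image (c e)"
proof -
  have "pos x \<in> {pathstart (c e), pathfinish (c e)}"
    using plane_drawingD(3)[OF assms(1,2)] assms(3) by blast
  then show ?thesis using pathstart_in_path_image[of "c e"] pathfinish_in_path_image[of "c e"] by auto
qed

lemma plane_drawing_disjoint_edges:
  assumes "plane_drawing V E pos c" "e \<in> E" "f \<in> E" "e \<inter> f = {}"
  shows "path_image (c e) \<inter> path_image (c f) = {}"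
proof -
  have "e \<noteq> {}" using plane_drawingD(3)[OF assms(1,2)] by auto
  then have "e \<noteq> f" using assms(4) by auto
  then show ?thesis using plane_drawingD(4)[OF assms(1-3)] assms(4) by simp
qed

lemma plane_drawing_chord_meets_cycle:
  assumes "plane_drawing V E pos c" "cycle_edges v n \<subseteq> E" "e \<in> E - cycle_edges v n"
  shows "path_image (c e) \<inter> (\<Union>d\<in>cycle_edges v n. path_image (c d)) \<subseteq> pos ` e"
proof -
  have "path_image (c e) \<inter> path_image (c d) \<subseteq> pos ` e" if "d \<in> cycle_edges v n" for d
  proof -
    have "d \<in> E" "e \<noteq> d" using that assms(2,3) by auto
    then show ?thesis using plane_drawingD(4)[OF assms(1), of e d] assms(3) by blast
  qed
  then show ?thesis by blast
qed

lemma hamiltonian_cycleD: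
  assumes "hamiltonian_cycle V E n v"
  shows "3 \<le> n" "bij_betw v {1..n} V" "cycle_edges v n \<subseteq> E"
  using assms unfolding hamiltonian_cycle_def by simp_all

lemma cycle_edgesE:
  assumes "d \<in> cycle_edges v n"
  obtains i where "1 \<le> i" "i < n" "d = {v i, v (Suc i)}" | "d = {v n, v 1}"
  using assms unfolding cycle_edges_def by blast

lemma cycle_edges_Suc: "1 \<le> i \<Longrightarrow> i < n \<Longrightarrow> {v i, v (Suc i)} \<in> cycle_edges v n"
  unfolding cycle_edges_def by blast

lemma cycle_edges_last: "{v n, v 1} \<in> cycle_edges v n"
  unfolding cycle_edges_def by blast

lemma cycle_edges_eq_image:
  assumes "1 \<le> n"
  shows "cycle_edges v n = (\<lambda>r. {v (Suc r), v (Suc (Suc r mod n))}) ` {..<n}"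
    (is "_ = ?f ` _")
proof (intro equalityI subsetI)
  fix d assume "d \<in> cycle_edges v n"
  then show "d \<in> ?f ` {..<n}"
  proof (cases rule: cycle_edgesE)
    case (1 i)
    then have "d = ?f (i - 1)" "i - 1 \<in> {..<n}" by simp_all
    then show ?thesis by (rule image_eqI)
  next
    case 2
    have "Suc (n - 1) = n" using assms by simp
    then have "d = ?f (n - 1)" "n - 1 \<in> {..<n}" using 2 assms by simp_all
    then show ?thesis by (rule image_eqI)
  qed
next
  fix d assume "d \<in> ?f ` {..<n}"
  then obtain r where r: "r < n" "d = ?f r" by blast
  show "d \<in> cycle_edges v n"
  proof (cases "Suc r < n")
    case True
    then show ?thesis using r cycle_edges_Suc[of "Suc r" n v] by simp
  next
    case False
    then have "Suc r = n" using r by simp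
    then show ?thesis using r cycle_edges_last[of v n] by simp
  qed
qed

lemma cyclic_pairs_Int:
  assumes inj: "inj_on w {..<n}" and "r < n" "r' < n"
  shows "{w r, w (Suc r mod n)} \<inter> {w r', w (Suc r' mod n)} = w ` ({r, Suc r mod n} \<inter> {r', Suc r' mod n})"
  using inj_on_image_Int[OF inj, of "{r, Suc r mod n}" "{r', Suc r' mod n}"] assms by auto

lemma cyclic_pairs_neq:
  assumes inj: "inj_on w {..<n}" and "3 \<le> n" "r < n" "r' < n" "r \<noteq> r'"
  shows "{w r, w (Suc r mod n)} \<noteq> {w r', w (Suc r' mod n)}"
proof
  assume "{w r, w (Suc r mod n)} = {w r', w (Suc r' mod n)}"
  then have "{r, Suc r mod n} = {r', Suc r' mod n}"
    using inj_on_image_eq_iff[OF inj, of "{r, Suc r mod n}" "{r', Suc r' mod n}"] assms by auto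
  then have "Suc (Suc r' mod n) mod n = r'" using assms by (auto simp: doubleton_eq_iff)
  moreover have "(r' + 2) mod n \<noteq> r'" using mod_add_neq[of r' n 2] assms by simp
  ultimately show False by (simp add: mod_Suc_eq)
qed

lemma hamiltonian_cycle_arc_cycle:
  assumes pd: "plane_drawing V E pos c" and hc: "hamiltonian_cycle V E n v"
  obtains \<gamma> where "arc_cycle n (\<lambda>r. pos (v (Suc r))) \<gamma>"
    "(\<Union>r<n. path_image (\<gamma> r)) = (\<Union>e\<in>cycle_edges v n. path_image (c e))"
proof -
  define Q where "Q r = pos (v (Suc r))" for r
  define ed where "ed r = {v (Suc r), v (Suc (Suc r mod n))}" for r
  note n3 = hamiltonian_cycleD(1)[OF hc] and bij = hamiltonian_cycleD(2)[OF hc]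
    and cyc = hamiltonian_cycleD(3)[OF hc]
  have cyc_ed: "cycle_edges v n = ed ` {..<n}"
    unfolding ed_def using n3 by (intro cycle_edges_eq_image) simp
  have "inj_on v (Suc ` {..<n})" "v ` Suc ` {..<n} = V"
    using bij by (simp_all add: bij_betw_def image_Suc_lessThan)
  then have vS: "inj_on (\<lambda>t. v (Suc t)) {..<n}" "(\<lambda>t. v (Suc t)) ` {..<n} \<subseteq> V"
    using comp_inj_on[OF inj_Suc] by (auto simp: o_def image_image)
  then have inj_Q: "inj_on Q {..<n}"
    unfolding Q_def using comp_inj_on[OF vS(1) inj_on_subset[OF plane_drawingD(1)[OF pd] vS(2)]] by (simp add: o_def)
  have nxt: "Suc r mod n < n" "Suc r mod n \<noteq> r" if "r < n" for r
    using that n3 mod_add_neq[of r n 1] by auto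
  have "\<exists>g. arc g \<and> pathstart g = Q r \<and> pathfinish g = Q (Suc r mod n) \<and>
      path_image g = path_image (c (ed r))" if "r < n" for r
  proof -
    have "ed r \<in> E" using that cyc cyc_ed by blast
    moreover have "pos ` ed r = {Q r, Q (Suc r mod n)}" by (simp add: ed_def Q_def)
    moreover have "Q r \<noteq> Q (Suc r mod n)" using inj_Q nxt[OF that] that by (auto dest: inj_onD)
    ultimately show ?thesis using plane_drawingD(2,3)[OF pd] by (metis arc_with_ends)
  qed
  then obtain \<gamma> where \<gamma>: "\<And>r. r < n \<Longrightarrow> arc (\<gamma> r) \<and> pathstart (\<gamma> r) = Q r \<and>
      pathfinish (\<gamma> r) = Q (Suc r mod n) \<and> path_image (\<gamma> r) = path_image (c (ed r))"
    by metis
  have "arc_cycle n Q \<gamma>"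
  proof
    fix r r' assume rr: "r < n" "r' < n" "r \<noteq> r'"
    have "ed r \<in> E" "ed r' \<in> E" using rr cyc cyc_ed by auto
    then have "path_image (c (ed r)) \<inter> path_image (c (ed r')) \<subseteq> pos ` (ed r \<inter> ed r')"
      using plane_drawingD(4)[OF pd] cyclic_pairs_neq[OF vS(1) n3 rr] unfolding ed_def by blast
    then have "path_image (\<gamma> r) \<inter> path_image (\<gamma> r') \<subseteq> pos ` (ed r \<inter> ed r')"
      using \<gamma> rr by simp
    also have "\<dots> = Q ` ({r, Suc r mod n} \<inter> {r', Suc r' mod n})"
      unfolding ed_def cyclic_pairs_Int[OF vS(1) rr(1,2)] image_image Q_def ..
    finally show "path_image (\<gamma> r) \<inter> path_image (\<gamma> r') \<subseteq> Q ` ({r, Suc r mod n} \<inter> {r', Suc r' mod n})" .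
  qed (use inj_Q \<gamma> in auto)
  moreover have "(\<Union>r<n. path_image (\<gamma> r)) = (\<Union>e\<in>cycle_edges v n. path_image (c e))"
    unfolding cyc_ed using \<gamma> by auto
  ultimately show thesis using that unfolding Q_def by blast
qed

lemma chord_notin_cycle_edges:
  assumes inj: "inj_on v {1..n}" and "1 \<le> a" "Suc a < b" "b \<le> n" "\<not> (a = 1 \<and> b = n)"
  shows "{v a, v b} \<notin> cycle_edges v n"
proof
  have v_eq: "v x = v y \<longleftrightarrow> x = y" if "x \<in> {1..n}" "y \<in> {1..n}" for x y
    using inj_on_eq_iff[OF inj that] .
  assume "{v a, v b} \<in> cycle_edges v n"
  then show False
  proof (cases rule: cycle_edgesE)
    case (1 i)
    then have "v a = v i \<and> v b = v (Suc i) \<or> v a = v (Suc i) \<and> v b = v i"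
      by (simp add: doubleton_eq_iff)
    moreover have "{a, b, i, Suc i} \<subseteq> {1..n}" using assms 1 by auto
    ultimately have "a = i \<and> b = Suc i \<or> a = Suc i \<and> b = i" using v_eq by auto
    then show False using assms by linarith
  next
    case 2
    then have "v a = v n \<and> v b = v 1 \<or> v a = v 1 \<and> v b = v n"
      by (simp add: doubleton_eq_iff)
    moreover have "{a, b, 1, n} \<subseteq> {1..n}" using assms by auto
    ultimately have "a = n \<and> b = 1 \<or> a = 1 \<and> b = n" using v_eq by auto
    then show False using assms by linarith
  qed
qed

lemma same_side_chords_not_interleaved:
  fixes c :: "'v set \<Rightarrow> real \<Rightarrow> complex" and v :: "nat \<Rightarrow> 'v" and n :: nat
  defines "C \<equiv> \<Union>e\<in>cycle_edges v n. path_image (c e)"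
  assumes pd: "plane_drawing V E pos c" and hc: "hamiltonian_cycle V E n v"
    and idx: "1 \<le> i" "i < k" "k < j" "j < l" "l \<le> n"
    and e: "{v i, v j} \<in> E - cycle_edges v n" and f: "{v k, v l} \<in> E - cycle_edges v n"
    and side: "(open_arc (c {v i, v j}) \<subseteq> inside C \<and> open_arc (c {v k, v l}) \<subseteq> inside C) \<or>
               (open_arc (c {v i, v j}) \<subseteq> outside C \<and> open_arc (c {v k, v l}) \<subseteq> outside C)"
  shows False
proof -
  obtain \<gamma> where cycle: "arc_cycle n (\<lambda>r. pos (v (Suc r))) \<gamma>" and C: "(\<Union>r<n. path_image (\<gamma> r)) = C"
    unfolding C_def by (rule hamiltonian_cycle_arc_cycle[OF pd hc])
  have inj_v: "inj_on v {1..n}" and "v ` {1..n} \<subseteq> V"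
    using hamiltonian_cycleD(2)[OF hc] by (auto simp: bij_betw_def)
  then have "inj_on (\<lambda>t. pos (v t)) {1..n}"
    using comp_inj_on[of v "{1..n}" pos] inj_on_subset[OF plane_drawingD(1)[OF pd]] by (simp add: o_def)
  then have ne: "pos (v i) \<noteq> pos (v j)"
    using idx by (auto dest: inj_onD)
  have disj: "{v i, v j} \<inter> {v k, v l} = {}"
    using inj_v idx by (auto dest: inj_onD)
  have e_E: "{v i, v j} \<in> E" and f_E: "{v k, v l} \<in> E" using e f by simp_all
  have "{pathstart (c {v i, v j}), pathfinish (c {v i, v j})} = {pos (v i), pos (v j)}"
    using plane_drawingD(3)[OF pd e_E] by simp
  then obtain g where g: "arc g" "pathstart g = pos (v i)" "pathfinish g = pos (v j)"
    "path_image g = path_image (c {v i, v j})" "open_arc g = open_arc (c {v i, v j})"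
    by (rule arc_with_ends[OF plane_drawingD(2)[OF pd e_E] _ ne])
  have g_C: "path_image g \<inter> C \<subseteq> {pos (v i), pos (v j)}"
    using plane_drawing_chord_meets_cycle[OF pd hamiltonian_cycleD(3)[OF hc] e] unfolding C_def g(4) by simp
  have disjoint: "path_image g \<inter> path_image (c {v k, v l}) = {}"
    unfolding g(4) by (rule plane_drawing_disjoint_edges[OF pd e_E f_E disj])
  have k_on: "pos (v k) \<in> path_image (c {v k, v l})" and l_on: "pos (v l) \<in> path_image (c {v k, v l})"
    by (simp_all add: plane_drawing_ends_on_arc[OF pd f_E])
  have shift: "Suc (i - 1) = i" "Suc (k - 1) = k" "Suc (j - 1) = j" "Suc (l - 1) = l"
    and order: "i - 1 < k - 1" "k - 1 < j - 1" "j - 1 < l - 1" "l - 1 < n"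
    using idx by auto
  note interleaving = arc_cycle.no_interleaving_chords[OF cycle order, unfolded shift C]
  show False
    by (rule interleaving[OF g(1-3) g_C plane_drawingD(2)[OF pd f_E] k_on l_on disjoint side[folded g(5)]])
qed

text \<open>Vertex v_j goes to p_j exactly when its chords to earlier vertices lie inside the cycle
  (vacuously so when it has none).\<close>

definition back_chords_in ::
  "complex set \<Rightarrow> 'v set set \<Rightarrow> ('v set \<Rightarrow> real \<Rightarrow> complex) \<Rightarrow> (nat \<Rightarrow> 'v) \<Rightarrow> nat \<Rightarrow> nat \<Rightarrow> bool" where
  "back_chords_in S E c v n j \<longleftrightarrow>
     (\<forall>i\<in>{1..<j}. {v i, v j} \<in> E - cycle_edges v n \<longrightarrow> open_arc (c {v i, v j}) \<subseteq> S)"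

lemma one_sided_cycle_no_interleaving:
  fixes c :: "'v set \<Rightarrow> real \<Rightarrow> complex" and v :: "nat \<Rightarrow> 'v" and n :: nat
  defines "C \<equiv> \<Union>e\<in>cycle_edges v n. path_image (c e)"
  assumes pd: "plane_drawing V E pos c" and os: "one_sided_ham_cycle V E pos c n v"
    and idx: "1 \<le> i" "i < k" "k < j" "j < l" "l \<le> n" and E: "{v i, v j} \<in> E" "{v k, v l} \<in> E"
  shows "back_chords_in (inside C) E c v n j \<noteq> back_chords_in (inside C) E c v n l"
proof
  assume same: "back_chords_in (inside C) E c v n j = back_chords_in (inside C) E c v n l"
  have hc: "hamiltonian_cycle V E n v" using os by (simp add: one_sided_ham_cycle_def)
  have one_sided: "\<forall>j\<in>{2..n}. back_chords_in (inside C) E c v n j \<or> back_chords_in (outside C) E c v n j"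
    using os[unfolded one_sided_ham_cycle_def Let_def, THEN conjunct2, THEN conjunct2]
    unfolding back_chords_in_def C_def .
  have inj: "inj_on v {1..n}" using hamiltonian_cycleD(2)[OF hc] by (simp add: bij_betw_def)
  have chords: "{v i, v j} \<in> E - cycle_edges v n" "{v k, v l} \<in> E - cycle_edges v n"
    using chord_notin_cycle_edges[OF inj, of i j] chord_notin_cycle_edges[OF inj, of k l] idx E by auto
  obtain S where S: "S = inside C \<or> S = outside C" "back_chords_in S E c v n j" "back_chords_in S E c v n l"
  proof (cases "back_chords_in (inside C) E c v n j")
    case True
    then show ?thesis using that[of "inside C"] same by simp
  next
    case False
    have "j \<in> {2..n}" "l \<in> {2..n}" using idx by auto
    then have "back_chords_in (outside C) E c v n j" "back_chords_in (outside C) E c v n l"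
      using False same one_sided by auto
    then show ?thesis using that[of "outside C"] by simp
  qed
  moreover have "i \<in> {1..<j}" "k \<in> {1..<l}" using idx by auto
  ultimately have "open_arc (c {v i, v j}) \<subseteq> S" "open_arc (c {v k, v l}) \<subseteq> S"
    using chords unfolding back_chords_in_def by blast+
  with S(1) have "(open_arc (c {v i, v j}) \<subseteq> inside C \<and> open_arc (c {v k, v l}) \<subseteq> inside C) \<or>
      (open_arc (c {v i, v j}) \<subseteq> outside C \<and> open_arc (c {v k, v l}) \<subseteq> outside C)"
    by blast
  from same_side_chords_not_interleaved[OF pd hc idx chords, folded C_def, OF this]
  show False .
qed

theorem theorem1:
  fixes y :: "nat \<Rightarrow> real" and n :: nat
    and V :: "'v set" and E E' :: "'v set set"
    and pos :: "'v \<Rightarrow> complex" and c :: "'v set \<Rightarrow> real \<Rightarrow> complex"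
    and v :: "nat \<Rightarrow> 'v"
  assumes "n \<ge> 3"
    and "exploding_double_chain y"
    and "simple_graph V E'"
    and "card V = n"
    and "plane_drawing V E pos c"
    and "E' \<subseteq> E"
    and "one_sided_ham_cycle V E pos c n v"
  shows "\<exists>pos'. (\<forall>i\<in>{1..n}. pos' (v i) = pt y i \<or> pos' (v i) = qt y i) \<and>
                straight_line_plane V E' pos'"
proof -
  \<comment> \<open>The hypotheses n \<ge> 3 and card V = n are implied by the Hamiltonian cycle and not used.\<close>
  define s where "s = back_chords_in (inside (\<Union>e\<in>cycle_edges v n. path_image (c e))) E c v n"
  have "hamiltonian_cycle V E n v" using assms(7) by (simp add: one_sided_ham_cycle_def)
  note bij = hamiltonian_cycleD(2)[OF this]
  define pos' where "pos' x = chain_point y s (inv_into {1..n} v x)" for x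
  have "straight_line_plane V E' pos'"
    unfolding pos'_def
  proof (rule straight_line_plane_chain[OF assms(2) bij assms(3)])
    fix i k j l assume "1 \<le> i" "i < k" "k < j" "j < l" "l \<le> n" "{v i, v j} \<in> E'" "{v k, v l} \<in> E'"
    then show "s j \<noteq> s l"
      unfolding s_def using one_sided_cycle_no_interleaving[OF assms(5,7)] assms(6) by blast
  qed
  moreover have "pos' (v i) = pt y i \<or> pos' (v i) = qt y i" if "i \<in> {1..n}" for i
    using bij_betw_inv_into_left[OF bij that] by (simp add: pos'_def chain_point_def)
  ultimately show ?thesis by blast
qed

end
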